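(* Let $Z = (G, c)$ and $Z' = (G', c')$ be zonotopes in $\mathbb{R}^n$ with $G = [g_1, \dots, g_N]$ and $G' = [\alpha_1 g_1, \dots, \alpha_N g_N]$ for some $\alpha_1, \dots, \alpha_N \in [0,1]$ (i.e. $Z'$ is aligned with $Z$). Then $$Z \ominus Z' = \big([(1-\alpha_1) g_1, (1-\alpha_2) g_2, \dots, (1-\alpha_N) g_N], \, c - c'\big).$$
   Context: A zonotope with generator-representation $(G, c)$, where $G = [g_1, \dots, g_N] \in \mathbb{R}^{n \times N}$ and $c \in \mathbb{R}^n$, is the set $\{c + \sum_{i=1}^N \theta_i g_i \mid \theta_i \in [-1,1], i = 1, \dots, N\}$; it is denoted $(G, c)$. The Minkowski difference of sets $X, Y \subseteq \mathbb{R}^n$ is $X \ominus Y = \{z \in \mathbb{R}^n \mid z + Y \subseteq X\}$. *)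

theory Defs
  imports "HOL-Analysis.Analysis"
begin

definition zonotope :: "nat \<Rightarrow> (nat \<Rightarrow> real ^ 'n) \<Rightarrow> real ^ 'n \<Rightarrow> (real ^ 'n) set" where
  "zonotope N G c = {c + (\<Sum>i<N. \<theta> i *\<^sub>R G i) | \<theta>. \<forall>i<N. \<theta> i \<in> {-1..1}}"

definition minkowski_diff :: "('a::ab_group_add) set \<Rightarrow> 'a set \<Rightarrow> 'a set" where
  "minkowski_diff X Y = {z. (\<lambda>y. z + y) ` Y \<subseteq> X}"

end

theory Submission
  imports Defs
begin

text \<open>
  The inclusion from right to left holds coefficientwise: a coefficient \<open>\<theta>\<close> of
  \<open>(1 - \<alpha>) g\<close> and a coefficient \<open>\<phi>\<close> of \<open>\<alpha> g\<close> combine to the convex combination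
  \<open>(1 - \<alpha>) \<theta> + \<alpha> \<phi> \<in> [-1, 1]\<close> as coefficient of \<open>g\<close>.
  For the converse, all three zonotopes are compact and convex, so it suffices to compare
  them in every direction \<open>a\<close>. The minimum of \<open>\<langle>a, -\<rangle>\<close> over \<open>(G, c)\<close> is
  \<open>\<langle>a, c\<rangle> - \<Sum>\<^sub>i |\<langle>a, g\<^sub>i\<rangle>|\<close>; adding the minimiser of \<open>(G', c')\<close> to a point \<open>z\<close> of the
  Minkowski difference shows that \<open>\<langle>a, z\<rangle>\<close> is at least the minimum over the claimed zonotope,
  because the minima of aligned zonotopes are additive in the factors \<open>\<alpha>\<^sub>i\<close>.
\<close>

lemma zonotope_Suc:
  "zonotope (Suc N) G c = (\<lambda>(x, t). x + t *\<^sub>R G N) ` (zonotope N G c \<times> {-1..1})"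
proof
  show "zonotope (Suc N) G c \<subseteq> (\<lambda>(x, t). x + t *\<^sub>R G N) ` (zonotope N G c \<times> {-1..1})"
  proof
    fix z assume "z \<in> zonotope (Suc N) G c"
    then obtain \<theta> where \<theta>: "\<forall>i<Suc N. \<theta> i \<in> {-1..1}"
      and z: "z = c + (\<Sum>i<Suc N. \<theta> i *\<^sub>R G i)"
      unfolding zonotope_def by blast
    have "c + (\<Sum>i<N. \<theta> i *\<^sub>R G i) \<in> zonotope N G c"
      unfolding zonotope_def using \<theta> by auto
    moreover have "z = (c + (\<Sum>i<N. \<theta> i *\<^sub>R G i)) + \<theta> N *\<^sub>R G N"
      using z by (simp add: add.assoc)
    ultimately show "z \<in> (\<lambda>(x, t). x + t *\<^sub>R G N) ` (zonotope N G c \<times> {-1..1})"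
      using \<theta> by force
  qed
next
  show "(\<lambda>(x, t). x + t *\<^sub>R G N) ` (zonotope N G c \<times> {-1..1}) \<subseteq> zonotope (Suc N) G c"
  proof clarify
    fix x and t :: real
    assume "x \<in> zonotope N G c" and t: "t \<in> {-1..1}"
    then obtain \<theta> where \<theta>: "\<forall>i<N. \<theta> i \<in> {-1..1}" and x: "x = c + (\<Sum>i<N. \<theta> i *\<^sub>R G i)"
      unfolding zonotope_def by blast
    have "(\<Sum>i<N. (\<theta>(N := t)) i *\<^sub>R G i) = (\<Sum>i<N. \<theta> i *\<^sub>R G i)"
      by (rule sum.cong) auto
    then have "x + t *\<^sub>R G N = c + (\<Sum>i<Suc N. (\<theta>(N := t)) i *\<^sub>R G i)"
      using x by (simp add: add.assoc)
    moreover have "\<forall>i<Suc N. (\<theta>(N := t)) i \<in> {-1..1}"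
      using \<theta> t by (auto simp: less_Suc_eq)
    ultimately show "x + t *\<^sub>R G N \<in> zonotope (Suc N) G c"
      unfolding zonotope_def by blast
  qed
qed

lemma compact_zonotope: "compact (zonotope N G c)"
proof (induction N)
  case 0
  then show ?case by (simp add: zonotope_def)
next
  case (Suc N)
  show ?case
    unfolding zonotope_Suc
    by (rule compact_continuous_image)
      (auto intro!: continuous_intros compact_Times Suc simp: case_prod_beta)
qed

lemma scaleR_in_zonotope:
  assumes "x \<in> zonotope N G c"
  shows "u *\<^sub>R x \<in> zonotope N (\<lambda>i. u *\<^sub>R G i) (u *\<^sub>R c)"
proof -
  obtain \<theta> where \<theta>: "\<forall>i<N. \<theta> i \<in> {-1..1}" and x: "x = c + (\<Sum>i<N. \<theta> i *\<^sub>R G i)"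
    using assms unfolding zonotope_def by blast
  have "u *\<^sub>R x = u *\<^sub>R c + (\<Sum>i<N. \<theta> i *\<^sub>R u *\<^sub>R G i)"
    by (simp add: x scaleR_add_right scaleR_sum_right mult.commute)
  then show ?thesis
    using \<theta> unfolding zonotope_def by blast
qed

lemma add_in_zonotope_aligned:
  assumes "x \<in> zonotope N (\<lambda>i. \<beta> i *\<^sub>R G i) d"
    and "y \<in> zonotope N (\<lambda>i. (1 - \<beta> i) *\<^sub>R G i) e"
    and \<beta>: "\<forall>i<N. \<beta> i \<in> {0..1}"
  shows "x + y \<in> zonotope N G (d + e)"
proof -
  obtain \<theta> \<phi> where \<theta>: "\<forall>i<N. \<theta> i \<in> {-1..1}" and \<phi>: "\<forall>i<N. \<phi> i \<in> {-1..1}"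
    and x: "x = d + (\<Sum>i<N. \<theta> i *\<^sub>R \<beta> i *\<^sub>R G i)"
    and y: "y = e + (\<Sum>i<N. \<phi> i *\<^sub>R (1 - \<beta> i) *\<^sub>R G i)"
    using assms(1,2) unfolding zonotope_def by blast
  define \<psi> where "\<psi> i = \<beta> i * \<theta> i + (1 - \<beta> i) * \<phi> i" for i
  have "\<psi> i \<in> {-1..1}" if "i < N" for i
    using convexD[OF convex_real_interval(5)[of "-1" 1], where x="\<theta> i"
        and y="\<phi> i" and u="\<beta> i" and v="1 - \<beta> i"] \<theta> \<phi> \<beta> that
    by (simp add: \<psi>_def)
  moreover have "(\<Sum>i<N. \<theta> i *\<^sub>R \<beta> i *\<^sub>R G i) + (\<Sum>i<N. \<phi> i *\<^sub>R (1 - \<beta> i) *\<^sub>R G i)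
      = (\<Sum>i<N. \<psi> i *\<^sub>R G i)"
    by (simp add: \<psi>_def scaleR_add_left sum.distrib mult.commute)
  then have "x + y = (d + e) + (\<Sum>i<N. \<psi> i *\<^sub>R G i)"
    by (simp add: x y ac_simps)
  ultimately show ?thesis
    unfolding zonotope_def by blast
qed

lemma convex_zonotope: "convex (zonotope N G c)"
proof (rule convexI)
  fix x y and u v :: real
  assume "x \<in> zonotope N G c" "y \<in> zonotope N G c" "0 \<le> u" "0 \<le> v" "u + v = 1"
  moreover have "v = 1 - u"
    using \<open>u + v = 1\<close> by simp
  ultimately have "u *\<^sub>R x \<in> zonotope N (\<lambda>i. u *\<^sub>R G i) (u *\<^sub>R c)"
    and "v *\<^sub>R y \<in> zonotope N (\<lambda>i. (1 - u) *\<^sub>R G i) (v *\<^sub>R c)"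
    using scaleR_in_zonotope by blast+
  then have "u *\<^sub>R x + v *\<^sub>R y \<in> zonotope N G (u *\<^sub>R c + v *\<^sub>R c)"
    using add_in_zonotope_aligned[where \<beta>="\<lambda>_. u"] \<open>0 \<le> u\<close> \<open>0 \<le> v\<close> \<open>u + v = 1\<close>
    by auto
  then show "u *\<^sub>R x + v *\<^sub>R y \<in> zonotope N G c"
    using \<open>u + v = 1\<close> by (simp flip: scaleR_add_left)
qed

lemma zonotope_inner_lower_bound:
  assumes "x \<in> zonotope N G c"
  shows "a \<bullet> c - (\<Sum>i<N. \<bar>a \<bullet> G i\<bar>) \<le> a \<bullet> x"
proof -
  obtain \<theta> where \<theta>: "\<forall>i<N. \<theta> i \<in> {-1..1}" and x: "x = c + (\<Sum>i<N. \<theta> i *\<^sub>R G i)"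
    using assms unfolding zonotope_def by blast
  have "(\<Sum>i<N. - \<bar>a \<bullet> G i\<bar>) \<le> (\<Sum>i<N. \<theta> i * (a \<bullet> G i))"
  proof (rule sum_mono)
    fix i assume "i \<in> {..<N}"
    then have "\<bar>\<theta> i\<bar> \<le> 1"
      using \<theta> by auto
    then have "\<bar>\<theta> i * (a \<bullet> G i)\<bar> \<le> \<bar>a \<bullet> G i\<bar>"
      by (simp add: abs_mult mult_left_le_one_le)
    then show "- \<bar>a \<bullet> G i\<bar> \<le> \<theta> i * (a \<bullet> G i)"
      by linarith
  qed
  then show ?thesis
    by (simp add: x inner_add_right inner_sum_right sum_negf)
qed

lemma zonotope_inner_lower_bound_attained:
  "\<exists>x\<in>zonotope N G c. a \<bullet> x = a \<bullet> c - (\<Sum>i<N. \<bar>a \<bullet> G i\<bar>)"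
proof
  let ?x = "c + (\<Sum>i<N. (- sgn (a \<bullet> G i)) *\<^sub>R G i)"
  have "\<forall>i<N. - sgn (a \<bullet> G i) \<in> {-1..1}"
    by (simp add: sgn_if)
  then show "?x \<in> zonotope N G c"
    unfolding zonotope_def by (blast intro: exI[where x="\<lambda>i. - sgn (a \<bullet> G i)"])
  have "sgn t * t = \<bar>t\<bar>" for t :: real
    by (simp add: sgn_if)
  then show "a \<bullet> ?x = a \<bullet> c - (\<Sum>i<N. \<bar>a \<bullet> G i\<bar>)"
    by (simp add: inner_add_right inner_diff_right inner_sum_right sum_negf)
qed

lemma subset_closed_convex_if_inner_bounds:
  fixes S T :: "'a::{real_inner, heine_borel} set"
  assumes "closed S" and "convex S"
    and below: "\<And>a. \<exists>s\<in>S. \<forall>t\<in>T. a \<bullet> s \<le> a \<bullet> t"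
  shows "T \<subseteq> S"
proof
  fix t assume "t \<in> T"
  show "t \<in> S"
  proof (rule ccontr)
    assume "t \<notin> S"
    then obtain a b where "a \<bullet> t < b" and "\<forall>x\<in>S. b < a \<bullet> x"
      using separating_hyperplane_closed_point[OF \<open>convex S\<close> \<open>closed S\<close>] by blast
    then show False
      using below[of a] \<open>t \<in> T\<close> by fastforce
  qed
qed

lemma sum_abs_inner_scaleR_nonneg:
  assumes "\<And>i. i \<in> I \<Longrightarrow> 0 \<le> \<beta> i"
  shows "(\<Sum>i\<in>I. \<bar>a \<bullet> (\<beta> i *\<^sub>R g i)\<bar>) = (\<Sum>i\<in>I. \<beta> i * \<bar>a \<bullet> g i\<bar>)"
  using assms by (intro sum.cong) (auto simp: abs_mult)

lemma zonotope_aligned_subset_minkowski_diff: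
  assumes "\<forall>i<N. \<alpha> i \<in> {0..1}"
  shows "zonotope N (\<lambda>i. (1 - \<alpha> i) *\<^sub>R G i) (c - c')
           \<subseteq> minkowski_diff (zonotope N G c) (zonotope N (\<lambda>i. \<alpha> i *\<^sub>R G i) c')"
proof
  fix z assume z: "z \<in> zonotope N (\<lambda>i. (1 - \<alpha> i) *\<^sub>R G i) (c - c')"
  have "z + w \<in> zonotope N G c" if "w \<in> zonotope N (\<lambda>i. \<alpha> i *\<^sub>R G i) c'" for w
  proof -
    have "w + z \<in> zonotope N G (c' + (c - c'))"
      using add_in_zonotope_aligned z that assms by blast
    then show ?thesis
      by (simp add: add.commute)
  qed
  then show "z \<in> minkowski_diff (zonotope N G c) (zonotope N (\<lambda>i. \<alpha> i *\<^sub>R G i) c')"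
    unfolding minkowski_diff_def by blast
qed

lemma minkowski_diff_zonotope_aligned_inner_lower_bound:
  assumes \<alpha>: "\<forall>i<N. \<alpha> i \<in> {0..1}"
    and z: "z \<in> minkowski_diff (zonotope N G c) (zonotope N (\<lambda>i. \<alpha> i *\<^sub>R G i) c')"
  shows "a \<bullet> (c - c') - (\<Sum>i<N. (1 - \<alpha> i) * \<bar>a \<bullet> G i\<bar>) \<le> a \<bullet> z"
proof -
  obtain w where "w \<in> zonotope N (\<lambda>i. \<alpha> i *\<^sub>R G i) c'"
    and "a \<bullet> w = a \<bullet> c' - (\<Sum>i<N. \<bar>a \<bullet> (\<alpha> i *\<^sub>R G i)\<bar>)"
    using zonotope_inner_lower_bound_attained by blast
  moreover have "(\<Sum>i<N. \<bar>a \<bullet> (\<alpha> i *\<^sub>R G i)\<bar>) = (\<Sum>i<N. \<alpha> i * \<bar>a \<bullet> G i\<bar>)"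
    using \<alpha> by (intro sum_abs_inner_scaleR_nonneg) auto
  ultimately have w: "a \<bullet> w = a \<bullet> c' - (\<Sum>i<N. \<alpha> i * \<bar>a \<bullet> G i\<bar>)"
    and zw: "z + w \<in> zonotope N G c"
    using z unfolding minkowski_diff_def by auto
  have "a \<bullet> c - (\<Sum>i<N. \<bar>a \<bullet> G i\<bar>) \<le> a \<bullet> z + a \<bullet> w"
    using zonotope_inner_lower_bound[OF zw, of a] by (simp only: inner_add_right)
  then show ?thesis
    using w by (simp add: inner_diff_right left_diff_distrib sum_subtractf)
qed

theorem proposition3:
  fixes N :: nat and G :: "nat \<Rightarrow> real ^ 'n" and c c' :: "real ^ 'n"
    and \<alpha> :: "nat \<Rightarrow> real"
  assumes "\<forall>i<N. \<alpha> i \<in> {0..1}"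
  shows "minkowski_diff (zonotope N G c) (zonotope N (\<lambda>i. \<alpha> i *\<^sub>R G i) c')
           = zonotope N (\<lambda>i. (1 - \<alpha> i) *\<^sub>R G i) (c - c')"
proof
  let ?D = "minkowski_diff (zonotope N G c) (zonotope N (\<lambda>i. \<alpha> i *\<^sub>R G i) c')"
    and ?R = "zonotope N (\<lambda>i. (1 - \<alpha> i) *\<^sub>R G i) (c - c')"
  show "?R \<subseteq> ?D"
    using assms by (rule zonotope_aligned_subset_minkowski_diff)
  show "?D \<subseteq> ?R"
  proof (rule subset_closed_convex_if_inner_bounds)
    show "closed ?R" "convex ?R"
      by (simp_all add: compact_imp_closed compact_zonotope convex_zonotope)
    fix a :: "real ^ 'n"
    obtain r where "r \<in> ?R"
      and r: "a \<bullet> r = a \<bullet> (c - c') - (\<Sum>i<N. \<bar>a \<bullet> ((1 - \<alpha> i) *\<^sub>R G i)\<bar>)"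
      using zonotope_inner_lower_bound_attained by blast
    have "(\<Sum>i<N. \<bar>a \<bullet> ((1 - \<alpha> i) *\<^sub>R G i)\<bar>) = (\<Sum>i<N. (1 - \<alpha> i) * \<bar>a \<bullet> G i\<bar>)"
      using assms by (intro sum_abs_inner_scaleR_nonneg) auto
    with r have "a \<bullet> r \<le> a \<bullet> z" if "z \<in> ?D" for z
      using minkowski_diff_zonotope_aligned_inner_lower_bound[OF assms that] by simp
    with \<open>r \<in> ?R\<close> show "\<exists>r\<in>?R. \<forall>z\<in>?D. a \<bullet> r \<le> a \<bullet> z"
      by blast
  qed
qed

end
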